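(* Let $\phi:\mathbb{K}[x_{i|A}: i\in[n],A\subseteq[n]\setminus\{i\}]\to\mathbb{K}[y_i,\beta_j: i,j\in[n]]$, $x_{i|A}\mapsto y_i\prod_{j\in A}\beta_j$, and $I_\phi=\ker\phi=I_{\phi'}\cap\mathbb{K}[x_{i|A}:i\notin A]$. Let $T=T_1\cup T_2$ where $T_1$ consists of those elements of $G_L$ all of whose variables lie in $\mathbb{K}[x_{i|A}:i\notin A]$ (i.e. binomials $x_{i|A}x_{j|B}-x_{i|A\cap B}x_{j|A\cup B}$ in $G_L$ with $i\le j$, $i\notin A$, $j\notin A\cup B$), and $$T_2=\{x_{i|A}x_{j|B}-x_{i|(A\cap B)\cup\{j\}}\,x_{j|(A\setminus\{j\})\cup B}:\ i<j,\ i\notin A,\ j\notin B,\ j\in A,\ x_{i|A},x_{j|B}\text{ incomparable in }L\}.$$ Then $T$ generates $I_\phi$.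
   Context: $\phi'$ is the extension of $\phi$ to $\mathbb{K}[x_{i|A}: i\in[n],A\subseteq[n]]$ by the same formula, and $I_{\phi'}=\ker\phi'$. $L$ is the lattice on the variables $x_{i|A}$ with $x_{i|A}\le x_{j|B}$ iff $i\le j$ and $A\subseteq B$. $G_L=\{x_{i|A}x_{j|B}-x_{\min(i,j)|A\cap B}\,x_{\max(i,j)|A\cup B}: x_{i|A},x_{j|B}\text{ incomparable in }L\}$. *)

theory Defs
  imports Main "HOL-Library.Poly_Mapping"
begin

type_synonym ('v, 'k) mpoly = "('v \<Rightarrow>\<^sub>0 nat) \<Rightarrow>\<^sub>0 'k"

definition mvar :: "'v \<Rightarrow> ('v, 'k::comm_ring_1) mpoly" where
  "mvar v = Poly_Mapping.single (Poly_Mapping.single v 1) 1"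

definition mconst :: "'k \<Rightarrow> ('v, 'k::comm_ring_1) mpoly" where
  "mconst c = Poly_Mapping.single 0 c"

definition poly_ring :: "'v set \<Rightarrow> ('v, 'k::comm_ring_1) mpoly set" where
  "poly_ring V = {p. \<forall>m\<in>Poly_Mapping.keys p. Poly_Mapping.keys m \<subseteq> V}"

definition subst_hom :: "('v \<Rightarrow> ('w, 'k::comm_ring_1) mpoly) \<Rightarrow> ('v, 'k) mpoly \<Rightarrow> ('w, 'k) mpoly" where
  "subst_hom s p = (\<Sum>m\<in>Poly_Mapping.keys p. mconst (Poly_Mapping.lookup p m) * (\<Prod>v\<in>Poly_Mapping.keys m. s v ^ Poly_Mapping.lookup m v))"

definition ideal_gen_in :: "'a::comm_ring_1 set \<Rightarrow> 'a set \<Rightarrow> 'a set" where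
  "ideal_gen_in R T = {\<Sum>t\<in>F. c t * t | F c. finite F \<and> F \<subseteq> T \<and> (\<forall>t\<in>F. c t \<in> R)}"

text \<open>Variables x_{i|A} are pairs (i, A). Target variables: Inl i = y_i, Inr j = beta_j.\<close>

definition xvar :: "nat \<Rightarrow> nat set \<Rightarrow> (nat \<times> nat set, 'k::comm_ring_1) mpoly" where
  "xvar i A = mvar (i, A)"

definition phi_vars :: "nat \<Rightarrow> (nat \<times> nat set) set" where
  "phi_vars n = {(i, A). i \<in> {1..n} \<and> A \<subseteq> {1..n} - {i}}"

definition phi :: "(nat \<times> nat set, 'k::comm_ring_1) mpoly \<Rightarrow> (nat + nat, 'k) mpoly" where
  "phi = subst_hom (\<lambda>(i, A). mvar (Inl i) * (\<Prod>j\<in>A. mvar (Inr j)))"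

definition I_phi :: "nat \<Rightarrow> (nat \<times> nat set, 'k::comm_ring_1) mpoly set" where
  "I_phi n = {p \<in> poly_ring (phi_vars n). phi p = 0}"

definition L_le :: "nat \<times> nat set \<Rightarrow> nat \<times> nat set \<Rightarrow> bool" where
  "L_le a b \<longleftrightarrow> fst a \<le> fst b \<and> snd a \<subseteq> snd b"

definition L_incomp :: "nat \<times> nat set \<Rightarrow> nat \<times> nat set \<Rightarrow> bool" where
  "L_incomp a b \<longleftrightarrow> \<not> L_le a b \<and> \<not> L_le b a"

definition L_vars :: "nat \<Rightarrow> (nat \<times> nat set) set" where
  "L_vars n = {(i, A). i \<in> {1..n} \<and> A \<subseteq> {1..n}}"

definition G_L_binom :: "nat \<Rightarrow> nat set \<Rightarrow> nat \<Rightarrow> nat set \<Rightarrow> (nat \<times> nat set, 'k::comm_ring_1) mpoly" where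
  "G_L_binom i A j B = xvar i A * xvar j B - xvar (min i j) (A \<inter> B) * xvar (max i j) (A \<union> B)"

definition G_L :: "nat \<Rightarrow> (nat \<times> nat set, 'k::comm_ring_1) mpoly set" where
  "G_L n = {G_L_binom i A j B | i A j B. (i, A) \<in> L_vars n \<and> (j, B) \<in> L_vars n
              \<and> L_incomp (i, A) (j, B)}"

definition T1 :: "nat \<Rightarrow> (nat \<times> nat set, 'k::comm_ring_1) mpoly set" where
  "T1 n = {G_L_binom i A j B | i A j B. (i, A) \<in> L_vars n \<and> (j, B) \<in> L_vars n
              \<and> L_incomp (i, A) (j, B)
              \<and> i \<notin> A \<and> j \<notin> B \<and> min i j \<notin> A \<inter> B \<and> max i j \<notin> A \<union> B}"

definition T2 :: "nat \<Rightarrow> (nat \<times> nat set, 'k::comm_ring_1) mpoly set" where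
  "T2 n = {xvar i A * xvar j B - xvar i ((A \<inter> B) \<union> {j}) * xvar j ((A - {j}) \<union> B) | i A j B.
              (i, A) \<in> L_vars n \<and> (j, B) \<in> L_vars n
              \<and> i < j \<and> i \<notin> A \<and> j \<notin> B \<and> j \<in> A \<and> L_incomp (i, A) (j, B)}"

end

theory Submission
  imports Defs
begin

text \<open>Since \<open>\<phi>\<close> sends monomials to monomials, its kernel is spanned by the binomials
  \<open>x\<^sup>m - x\<^sup>m\<^sup>'\<close> with \<open>\<phi>(x\<^sup>m) = \<phi>(x\<^sup>m\<^sup>')\<close>; so it suffices to connect any two monomials with the same
  image by moves along binomials of \<open>T\<close>. This is done by induction on the degree of the image.
  Let \<open>j\<close> be the largest index of a variable in \<open>x\<^sup>m\<close>, and \<open>x\<^bsub>j|A\<^esub>\<close> such a variable. If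
  \<open>\<beta>\<^sub>k\<close> (\<open>k \<noteq> j\<close>) divides the image but \<open>k \<notin> A\<close>, some variable \<open>x\<^bsub>i|B\<^esub>\<close> with \<open>i \<le> j\<close> and
  \<open>k \<in> B\<close> occurs, and a binomial of \<open>T\<^sub>1\<close> (if \<open>j \<notin> B\<close>) or of \<open>T\<^sub>2\<close> (if \<open>j \<in> B\<close>) replaces
  \<open>x\<^bsub>i|B\<^esub> x\<^bsub>j|A\<^esub>\<close> by a product whose \<open>j\<close>-variable has the larger set \<open>A \<union> B - {j}\<close>.
  Repeating this, \<open>x\<^sup>m\<close> is connected to \<open>x\<^bsub>j|U\<^esub> x\<^sup>r\<close>, where \<open>U\<close> is the set of all \<open>k \<noteq> j\<close>
  with \<open>\<beta>\<^sub>k\<close> dividing the image; the same holds for \<open>x\<^sup>m\<^sup>'\<close>, and the remaining factors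
  \<open>x\<^sup>r\<close>, \<open>x\<^sup>r\<^sup>'\<close> have a common image of smaller degree.\<close>

abbreviation mmonom :: "('v \<Rightarrow>\<^sub>0 nat) \<Rightarrow> ('v, 'k::comm_ring_1) mpoly" where
  "mmonom m \<equiv> Poly_Mapping.single m 1"

abbreviation subst_monom :: "('v \<Rightarrow> ('w, 'k::comm_ring_1) mpoly) \<Rightarrow> ('v \<Rightarrow>\<^sub>0 nat) \<Rightarrow> ('w, 'k) mpoly" where
  "subst_monom s m \<equiv> (\<Prod>v\<in>Poly_Mapping.keys m. s v ^ Poly_Mapping.lookup m v)"

section \<open>Finitely supported maps\<close>

lemma poly_mapping_eq_sum_single:
  "p = (\<Sum>m\<in>Poly_Mapping.keys p. Poly_Mapping.single m (Poly_Mapping.lookup p m))"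
  by (rule poly_mapping_eqI) (simp add: lookup_sum lookup_single when_def sum.delta in_keys_iff)

lemma single_sum: "Poly_Mapping.single k (sum f A) = (\<Sum>x\<in>A. Poly_Mapping.single k (f x))"
  by (induction A rule: infinite_finite_induct) (auto simp: single_add)

lemma prod_single_one:
  "(\<Prod>x\<in>A. Poly_Mapping.single (g x) (1::'k::comm_ring_1)) = Poly_Mapping.single (\<Sum>x\<in>A. g x) 1"
  by (induction A rule: infinite_finite_induct) (auto simp: mult_single)

lemma obtain_single_add:
  assumes "v \<in> Poly_Mapping.keys (m :: 'a \<Rightarrow>\<^sub>0 nat)"
  obtains r where "m = Poly_Mapping.single v 1 + r" "Poly_Mapping.keys r \<subseteq> Poly_Mapping.keys m"
proof
  show "m = Poly_Mapping.single v 1 + (m - Poly_Mapping.single v 1)"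
    by (rule poly_mapping_eqI)
      (use assms in \<open>auto simp: lookup_add lookup_minus lookup_single when_def in_keys_iff\<close>)
  show "Poly_Mapping.keys (m - Poly_Mapping.single v 1) \<subseteq> Poly_Mapping.keys m"
    by (auto simp: in_keys_iff lookup_minus)
qed

lemma sum_nat_pos_iff: "finite A \<Longrightarrow> 0 < sum f A \<longleftrightarrow> (\<exists>a\<in>A. 0 < (f a :: nat))"
  by (metis gr0I not_gr0 sum_eq_0_iff)

definition total_degree :: "('a \<Rightarrow>\<^sub>0 nat) \<Rightarrow> nat" where
  "total_degree e = (\<Sum>z\<in>Poly_Mapping.keys e. Poly_Mapping.lookup e z)"

lemma total_degree_add: "total_degree (a + b) = total_degree a + total_degree b"
proof -
  let ?S = "Poly_Mapping.keys a \<union> Poly_Mapping.keys b"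
  have superset: "total_degree x = (\<Sum>z\<in>?S. Poly_Mapping.lookup x z)" if "Poly_Mapping.keys x \<subseteq> ?S" for x
    unfolding total_degree_def
    by (rule sum.mono_neutral_left) (use that in \<open>auto simp: not_in_keys_iff_lookup_eq_zero\<close>)
  show ?thesis
    by (simp add: superset keys_add lookup_add sum.distrib)
qed

lemma total_degree_pos: "e \<noteq> 0 \<Longrightarrow> 0 < total_degree e"
  unfolding total_degree_def
  by (metis keys_eq_empty all_not_in_conv finite_keys in_keys_iff gr0I sum_eq_0_iff)

section \<open>Substitution homomorphisms\<close>

lemma mconst_0 [simp]: "mconst 0 = 0"
  by (simp add: mconst_def)

lemma mconst_add: "mconst (a + b) = mconst a + mconst b"
  by (simp add: mconst_def single_add)

lemma mconst_mult: "mconst (a * b) = mconst a * mconst b"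
  by (simp add: mconst_def mult_single)

lemma subst_hom_eq_sum_superset:
  assumes "finite S" "Poly_Mapping.keys p \<subseteq> S"
  shows "subst_hom s p = (\<Sum>m\<in>S. mconst (Poly_Mapping.lookup p m) * subst_monom s m)"
  unfolding subst_hom_def
  by (rule sum.mono_neutral_left[OF assms]) (simp add: not_in_keys_iff_lookup_eq_zero)

lemma subst_hom_0 [simp]: "subst_hom s 0 = 0"
  by (simp add: subst_hom_def)

lemma subst_hom_add: "subst_hom s (p + q) = subst_hom s p + subst_hom s q"
proof -
  let ?S = "Poly_Mapping.keys p \<union> Poly_Mapping.keys q"
  have "subst_hom s (p + q) = (\<Sum>m\<in>?S. mconst (Poly_Mapping.lookup (p + q) m) * subst_monom s m)"
    by (rule subst_hom_eq_sum_superset) (simp_all add: keys_add)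
  also have "\<dots> = (\<Sum>m\<in>?S. mconst (Poly_Mapping.lookup p m) * subst_monom s m)
                 + (\<Sum>m\<in>?S. mconst (Poly_Mapping.lookup q m) * subst_monom s m)"
    by (simp add: lookup_add mconst_add distrib_right sum.distrib)
  also have "\<dots> = subst_hom s p + subst_hom s q"
    by (simp add: subst_hom_eq_sum_superset[of ?S])
  finally show ?thesis .
qed

lemma subst_hom_diff: "subst_hom s (p - q) = subst_hom s p - subst_hom s q"
  using subst_hom_add[of s "p - q" q] by (simp add: eq_diff_eq)

lemma subst_hom_sum: "subst_hom s (sum f A) = (\<Sum>a\<in>A. subst_hom s (f a))"
  by (induction A rule: infinite_finite_induct) (auto simp: subst_hom_add)

lemma subst_hom_single: "subst_hom s (Poly_Mapping.single m c) = mconst c * subst_monom s m"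
  by (subst subst_hom_eq_sum_superset[of "{m}"]) auto

lemma subst_monom_add: "subst_monom s (a + b) = subst_monom s a * subst_monom s b"
proof -
  let ?S = "Poly_Mapping.keys a \<union> Poly_Mapping.keys b"
  have superset: "subst_monom s x = (\<Prod>v\<in>?S. s v ^ Poly_Mapping.lookup x v)"
    if "Poly_Mapping.keys x \<subseteq> ?S" for x
    by (rule prod.mono_neutral_left) (use that in \<open>auto simp: in_keys_iff\<close>)
  have "subst_monom s (a + b) = (\<Prod>v\<in>?S. s v ^ Poly_Mapping.lookup (a + b) v)"
    by (rule superset) (rule keys_add)
  also have "\<dots> = (\<Prod>v\<in>?S. s v ^ Poly_Mapping.lookup a v) * (\<Prod>v\<in>?S. s v ^ Poly_Mapping.lookup b v)"
    by (simp add: lookup_add power_add prod.distrib)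
  finally show ?thesis by (simp add: superset)
qed

lemma subst_hom_mult: "subst_hom s (p * q) = subst_hom s p * subst_hom s q"
proof -
  have "p * q = (\<Sum>a\<in>Poly_Mapping.keys p. \<Sum>b\<in>Poly_Mapping.keys q.
           Poly_Mapping.single (a + b) (Poly_Mapping.lookup p a * Poly_Mapping.lookup q b))"
    by (subst (1 2) poly_mapping_eq_sum_single) (simp add: sum_product mult_single)
  then have "subst_hom s (p * q) = (\<Sum>a\<in>Poly_Mapping.keys p. \<Sum>b\<in>Poly_Mapping.keys q.
      (mconst (Poly_Mapping.lookup p a) * subst_monom s a) * (mconst (Poly_Mapping.lookup q b) * subst_monom s b))"
    by (simp add: subst_hom_sum subst_hom_single subst_monom_add mconst_mult mult_ac)
  also have "\<dots> = subst_hom s p * subst_hom s q"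
    by (simp add: subst_hom_def sum_product)
  finally show ?thesis .
qed

section \<open>Polynomial subrings and the ideals they generate\<close>

lemma poly_ring_0 [simp]: "0 \<in> poly_ring V"
  by (simp add: poly_ring_def)

lemma poly_ring_single: "Poly_Mapping.keys m \<subseteq> V \<Longrightarrow> Poly_Mapping.single m c \<in> poly_ring V"
  by (simp add: poly_ring_def)

lemma poly_ring_mconst: "mconst c \<in> poly_ring V"
  by (simp add: mconst_def poly_ring_single)

lemma poly_ring_1: "1 \<in> poly_ring V"
  using poly_ring_mconst[of 1 V] by (simp add: mconst_def)

lemma poly_ring_add: "p \<in> poly_ring V \<Longrightarrow> q \<in> poly_ring V \<Longrightarrow> p + q \<in> poly_ring V"
  unfolding poly_ring_def using keys_add[of p q] by auto

lemma poly_ring_diff: "p \<in> poly_ring V \<Longrightarrow> q \<in> poly_ring V \<Longrightarrow> p - q \<in> poly_ring V"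
  unfolding poly_ring_def using keys_diff[of p q] by auto

lemma poly_ring_mult: "p \<in> poly_ring V \<Longrightarrow> q \<in> poly_ring V \<Longrightarrow> p * q \<in> poly_ring V"
  unfolding poly_ring_def
proof safe
  fix m x
  assume p: "\<forall>m\<in>Poly_Mapping.keys p. Poly_Mapping.keys m \<subseteq> V"
    and q: "\<forall>m\<in>Poly_Mapping.keys q. Poly_Mapping.keys m \<subseteq> V"
    and m: "m \<in> Poly_Mapping.keys (p * q)" and x: "x \<in> Poly_Mapping.keys m"
  from m keys_mult obtain a b
    where "m = a + b" "a \<in> Poly_Mapping.keys p" "b \<in> Poly_Mapping.keys q" by blast
  with x keys_add[of a b] p q show "x \<in> V" by blast
qed

lemma poly_ring_sum: "(\<And>a. a \<in> A \<Longrightarrow> f a \<in> poly_ring V) \<Longrightarrow> sum f A \<in> poly_ring V"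
  by (induction A rule: infinite_finite_induct) (auto intro: poly_ring_add)

lemma ideal_gen_inI:
  "finite F \<Longrightarrow> F \<subseteq> T \<Longrightarrow> (\<And>t. t \<in> F \<Longrightarrow> c t \<in> R) \<Longrightarrow> (\<Sum>t\<in>F. c t * t) \<in> ideal_gen_in R T"
  unfolding ideal_gen_in_def by blast

lemma ideal_gen_inE:
  assumes "x \<in> ideal_gen_in R T"
  obtains c F where "x = (\<Sum>t\<in>F. c t * t)" "finite F" "F \<subseteq> T" "\<And>t. t \<in> F \<Longrightarrow> c t \<in> R"
  using assms unfolding ideal_gen_in_def by blast

lemma ideal_gen_in_0: "0 \<in> ideal_gen_in R T"
  using ideal_gen_inI[of "{}"] by simp

lemma ideal_gen_in_generator: "t \<in> T \<Longrightarrow> 1 \<in> R \<Longrightarrow> t \<in> ideal_gen_in R T"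
  using ideal_gen_inI[of "{t}" T "\<lambda>_. 1"] by simp

lemma ideal_gen_in_add:
  assumes R: "0 \<in> R" "\<And>a b. a \<in> R \<Longrightarrow> b \<in> R \<Longrightarrow> a + b \<in> R"
    and x: "x \<in> ideal_gen_in R T" and y: "y \<in> ideal_gen_in R T"
  shows "x + y \<in> ideal_gen_in R T"
proof -
  obtain c1 F1 where F1: "x = (\<Sum>t\<in>F1. c1 t * t)" "finite F1" "F1 \<subseteq> T" "\<And>t. t \<in> F1 \<Longrightarrow> c1 t \<in> R"
    using ideal_gen_inE[OF x] by blast
  obtain c2 F2 where F2: "y = (\<Sum>t\<in>F2. c2 t * t)" "finite F2" "F2 \<subseteq> T" "\<And>t. t \<in> F2 \<Longrightarrow> c2 t \<in> R"
    using ideal_gen_inE[OF y] by blast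
  define c where "c t = (if t \<in> F1 then c1 t else 0) + (if t \<in> F2 then c2 t else 0)" for t
  have "(\<Sum>t\<in>F1 \<union> F2. c t * t)
      = (\<Sum>t\<in>F1 \<union> F2. if t \<in> F1 then c1 t * t else 0) + (\<Sum>t\<in>F1 \<union> F2. if t \<in> F2 then c2 t * t else 0)"
    unfolding sum.distrib[symmetric] by (rule sum.cong) (auto simp: c_def distrib_right)
  also have "\<dots> = x + y"
    using F1(2) F2(2) by (simp add: sum.If_cases F1(1) F2(1) Int_absorb1)
  finally have "x + y = (\<Sum>t\<in>F1 \<union> F2. c t * t)" by simp
  moreover have "c t \<in> R" if "t \<in> F1 \<union> F2" for t
    using that F1(4) F2(4) R unfolding c_def by auto
  ultimately show ?thesis
    using F1(2,3) F2(2,3) ideal_gen_inI[of "F1 \<union> F2" T c R] by simp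
qed

lemma ideal_gen_in_mult:
  assumes R: "\<And>a b. a \<in> R \<Longrightarrow> b \<in> R \<Longrightarrow> a * b \<in> R"
    and r: "r \<in> R" and x: "x \<in> ideal_gen_in R T"
  shows "r * x \<in> ideal_gen_in R T"
proof -
  obtain c F where F: "x = (\<Sum>t\<in>F. c t * t)" "finite F" "F \<subseteq> T" "\<And>t. t \<in> F \<Longrightarrow> c t \<in> R"
    using ideal_gen_inE[OF x] by blast
  have "r * x = (\<Sum>t\<in>F. (r * c t) * t)"
    by (simp add: F(1) sum_distrib_left mult.assoc)
  then show ?thesis
    using F(2-4) r R by (simp add: ideal_gen_inI)
qed

lemma poly_ideal_add:
  "x \<in> ideal_gen_in (poly_ring V) T \<Longrightarrow> y \<in> ideal_gen_in (poly_ring V) T \<Longrightarrow> x + y \<in> ideal_gen_in (poly_ring V) T"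
  by (rule ideal_gen_in_add) (auto intro: poly_ring_add)

lemma poly_ideal_mult:
  "r \<in> poly_ring V \<Longrightarrow> x \<in> ideal_gen_in (poly_ring V) T \<Longrightarrow> r * x \<in> ideal_gen_in (poly_ring V) T"
  by (rule ideal_gen_in_mult) (auto intro: poly_ring_mult)

lemma poly_ideal_sum:
  "(\<And>a. a \<in> A \<Longrightarrow> f a \<in> ideal_gen_in (poly_ring V) T) \<Longrightarrow> sum f A \<in> ideal_gen_in (poly_ring V) T"
  by (induction A rule: infinite_finite_induct) (auto intro: poly_ideal_add ideal_gen_in_0)

lemma poly_ideal_subset_kernel:
  assumes "\<And>t. t \<in> T \<Longrightarrow> t \<in> poly_ring V \<and> subst_hom s t = 0"
  shows "ideal_gen_in (poly_ring V) T \<subseteq> {p \<in> poly_ring V. subst_hom s p = 0}"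
proof
  fix p assume "p \<in> ideal_gen_in (poly_ring V) T"
  then obtain c F where F: "p = (\<Sum>t\<in>F. c t * t)" "finite F" "F \<subseteq> T" "\<And>t. t \<in> F \<Longrightarrow> c t \<in> poly_ring V"
    by (elim ideal_gen_inE) blast
  have "p \<in> poly_ring V"
    unfolding F(1) using F(3,4) assms by (intro poly_ring_sum poly_ring_mult) auto
  moreover have "subst_hom s p = 0"
    using F(3) assms unfolding F(1) by (auto simp: subst_hom_sum subst_hom_mult intro!: sum.neutral)
  ultimately show "p \<in> {p \<in> poly_ring V. subst_hom s p = 0}" by blast
qed

lemma mmonom_diff_trans:
  "mmonom a - mmonom b \<in> ideal_gen_in (poly_ring V) T \<Longrightarrow> mmonom b - mmonom c \<in> ideal_gen_in (poly_ring V) T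
    \<Longrightarrow> mmonom a - mmonom c \<in> ideal_gen_in (poly_ring V) T"
  by (drule (1) poly_ideal_add) simp

lemma mmonom_diff_sym:
  assumes "mmonom a - mmonom b \<in> ideal_gen_in (poly_ring V) T"
  shows "mmonom b - mmonom a \<in> ideal_gen_in (poly_ring V) T"
proof -
  have "mmonom b - mmonom a = mconst (-1) * (mmonom a - mmonom b)"
    by (simp add: mconst_def single_uminus)
  also have "\<dots> \<in> ideal_gen_in (poly_ring V) T"
    by (rule poly_ideal_mult[OF poly_ring_mconst assms])
  finally show ?thesis .
qed

lemma mmonom_diff_shift:
  assumes "Poly_Mapping.keys u \<subseteq> V" "mmonom a - mmonom b \<in> ideal_gen_in (poly_ring V) T"
  shows "mmonom (u + a) - mmonom (u + b) \<in> ideal_gen_in (poly_ring V) T"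
proof -
  have "mmonom (u + a) - mmonom (u + b) = mmonom u * (mmonom a - mmonom b)"
    by (simp add: mult_single right_diff_distrib)
  also have "\<dots> \<in> ideal_gen_in (poly_ring V) T"
    by (rule poly_ideal_mult[OF poly_ring_single[OF assms(1)] assms(2)])
  finally show ?thesis .
qed

lemma mmonom_diff_common_factor:
  assumes "mmonom r - mmonom r' \<in> ideal_gen_in (poly_ring V) T" "Poly_Mapping.keys x \<subseteq> V"
    and "mmonom m - mmonom (x + r) \<in> ideal_gen_in (poly_ring V) T"
    and "mmonom m' - mmonom (x + r') \<in> ideal_gen_in (poly_ring V) T"
  shows "mmonom m - mmonom m' \<in> ideal_gen_in (poly_ring V) T"
  using assms mmonom_diff_shift[OF assms(2,1)] by (meson mmonom_diff_sym mmonom_diff_trans)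

lemma exchange_pair:
  assumes m: "Poly_Mapping.keys m \<subseteq> V" and vw: "v \<in> Poly_Mapping.keys m" "w \<in> Poly_Mapping.keys m" "v \<noteq> w"
    and v'w': "v' \<in> V" "w' \<in> V" and t: "mvar v * mvar w - mvar v' * mvar w' \<in> T"
  obtains m' where "Poly_Mapping.keys m' \<subseteq> V" "w' \<in> Poly_Mapping.keys m'"
    "mmonom m - mmonom m' \<in> ideal_gen_in (poly_ring V) T"
proof -
  obtain m\<^sub>1 where m\<^sub>1: "m = Poly_Mapping.single v 1 + m\<^sub>1" "Poly_Mapping.keys m\<^sub>1 \<subseteq> Poly_Mapping.keys m"
    using vw(1) by (rule obtain_single_add)
  have "w \<in> Poly_Mapping.keys m\<^sub>1"
    using vw(2,3) unfolding m\<^sub>1(1) by (simp add: in_keys_iff lookup_add lookup_single)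
  then obtain u where u: "m\<^sub>1 = Poly_Mapping.single w 1 + u" "Poly_Mapping.keys u \<subseteq> Poly_Mapping.keys m\<^sub>1"
    by (rule obtain_single_add)
  have decomp: "m = u + Poly_Mapping.single v 1 + Poly_Mapping.single w 1"
    using m\<^sub>1(1) u(1) by (simp add: ac_simps)
  have u_vars: "Poly_Mapping.keys u \<subseteq> V"
    using u(2) m\<^sub>1(2) m by blast
  let ?m' = "u + Poly_Mapping.single v' 1 + Poly_Mapping.single w' 1"
  have "mmonom m - mmonom ?m' = mmonom u * (mvar v * mvar w - mvar v' * mvar w')"
    by (simp add: decomp mvar_def mult_single right_diff_distrib add.assoc)
  also have "\<dots> \<in> ideal_gen_in (poly_ring V) T"
    by (intro poly_ideal_mult poly_ring_single u_vars ideal_gen_in_generator t poly_ring_1)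
  finally have "mmonom m - mmonom ?m' \<in> ideal_gen_in (poly_ring V) T" .
  moreover have "Poly_Mapping.keys ?m' \<subseteq> V"
    using u_vars v'w' keys_add[of "u + Poly_Mapping.single v' 1" "Poly_Mapping.single w' 1"]
      keys_add[of u "Poly_Mapping.single v' 1"] by auto
  moreover have "w' \<in> Poly_Mapping.keys ?m'"
    by (simp add: in_keys_iff lookup_add)
  ultimately show thesis using that by blast
qed

section \<open>Monomial maps\<close>

text \<open>The exponent of the image of \<open>x\<^sup>m\<close> under the monomial map \<open>x\<^sub>v \<mapsto> y\<^bsup>e v\<^esup>\<close>.\<close>

definition mon_exp :: "('v \<Rightarrow> ('w \<Rightarrow>\<^sub>0 nat)) \<Rightarrow> ('v \<Rightarrow>\<^sub>0 nat) \<Rightarrow> 'w \<Rightarrow>\<^sub>0 nat" where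
  "mon_exp e m = (\<Sum>v\<in>Poly_Mapping.keys m. \<Sum>_<Poly_Mapping.lookup m v. e v)"

lemma lookup_mon_exp:
  "Poly_Mapping.lookup (mon_exp e m) z
     = (\<Sum>v\<in>Poly_Mapping.keys m. Poly_Mapping.lookup m v * Poly_Mapping.lookup (e v) z)"
  by (simp add: mon_exp_def lookup_sum)

lemma mon_exp_0 [simp]: "mon_exp e 0 = 0"
  by (simp add: mon_exp_def)

lemma mon_exp_single: "mon_exp e (Poly_Mapping.single v 1) = e v"
  by (simp add: mon_exp_def)

lemma mon_exp_add: "mon_exp e (a + b) = mon_exp e a + mon_exp e b"
proof (rule poly_mapping_eqI)
  fix z
  let ?S = "Poly_Mapping.keys a \<union> Poly_Mapping.keys b"
  have superset: "Poly_Mapping.lookup (mon_exp e x) z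
      = (\<Sum>v\<in>?S. Poly_Mapping.lookup x v * Poly_Mapping.lookup (e v) z)"
    if "Poly_Mapping.keys x \<subseteq> ?S" for x
    unfolding lookup_mon_exp
    by (rule sum.mono_neutral_left) (use that in \<open>auto simp: not_in_keys_iff_lookup_eq_zero\<close>)
  show "Poly_Mapping.lookup (mon_exp e (a + b)) z = Poly_Mapping.lookup (mon_exp e a + mon_exp e b) z"
    by (simp add: superset keys_add lookup_add distrib_right sum.distrib)
qed

lemma mon_exp_eq_0_iff:
  assumes "\<And>v. e v \<noteq> 0"
  shows "mon_exp e m = 0 \<longleftrightarrow> m = 0"
proof
  assume zero: "mon_exp e m = 0"
  show "m = 0"
  proof (rule ccontr)
    assume "m \<noteq> 0"
    then obtain v where v: "v \<in> Poly_Mapping.keys m"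
      by (metis all_not_in_conv keys_eq_empty)
    obtain z where z: "z \<in> Poly_Mapping.keys (e v)"
      using assms[of v] by (metis all_not_in_conv keys_eq_empty)
    have "Poly_Mapping.lookup m v * Poly_Mapping.lookup (e v) z \<le> Poly_Mapping.lookup (mon_exp e m) z"
      unfolding lookup_mon_exp using v by (intro member_le_sum) auto
    with zero v z show False
      by (simp add: in_keys_iff)
  qed
qed simp

lemma subst_hom_monomial_map_single:
  "subst_hom (\<lambda>v. Poly_Mapping.single (e v) 1) (Poly_Mapping.single m c)
     = (Poly_Mapping.single (mon_exp e m) c :: ('w, 'k::comm_ring_1) mpoly)"
proof -
  have "(\<Prod>v\<in>Poly_Mapping.keys m. Poly_Mapping.single (e v) (1::'k) ^ Poly_Mapping.lookup m v)
      = (\<Prod>v\<in>Poly_Mapping.keys m. \<Prod>_<Poly_Mapping.lookup m v. Poly_Mapping.single (e v) 1)"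
    by simp
  also have "\<dots> = Poly_Mapping.single (mon_exp e m) 1"
    unfolding mon_exp_def by (simp only: prod_single_one)
  finally show ?thesis
    by (simp add: subst_hom_single mconst_def mult_single)
qed

lemma lookup_subst_hom_monomial_map:
  "Poly_Mapping.lookup (subst_hom (\<lambda>v. Poly_Mapping.single (e v) 1) p :: ('w, 'k::comm_ring_1) mpoly) z
     = (\<Sum>m\<in>{m \<in> Poly_Mapping.keys p. mon_exp e m = z}. Poly_Mapping.lookup p m)"
proof -
  have "subst_hom (\<lambda>v. Poly_Mapping.single (e v) 1) p
      = subst_hom (\<lambda>v. Poly_Mapping.single (e v) 1)
          (\<Sum>m\<in>Poly_Mapping.keys p. Poly_Mapping.single m (Poly_Mapping.lookup p m))"
    by (simp flip: poly_mapping_eq_sum_single)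
  also have "\<dots> = (\<Sum>m\<in>Poly_Mapping.keys p. Poly_Mapping.single (mon_exp e m) (Poly_Mapping.lookup p m))"
    by (simp add: subst_hom_sum subst_hom_monomial_map_single)
  finally show ?thesis
    by (simp add: lookup_sum lookup_single when_def sum.inter_filter)
qed

lemma subst_hom_monomial_map_mmonom_diff_eq_0_iff:
  "subst_hom (\<lambda>v. Poly_Mapping.single (e v) 1) (mmonom m - mmonom m' :: ('v, 'k::comm_ring_1) mpoly) = 0
     \<longleftrightarrow> mon_exp e m = mon_exp e m'"
  by (simp add: subst_hom_diff subst_hom_monomial_map_single)
    (metis lookup_single_eq lookup_single_not_eq zero_neq_one)

lemma kernel_subset_poly_ideal_if_fibres_connected:
  fixes T :: "('v, 'k::comm_ring_1) mpoly set"
  assumes connected: "\<And>m m'. Poly_Mapping.keys m \<subseteq> V \<Longrightarrow> Poly_Mapping.keys m' \<subseteq> V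
      \<Longrightarrow> mon_exp e m = mon_exp e m' \<Longrightarrow> mmonom m - mmonom m' \<in> ideal_gen_in (poly_ring V) T"
    and p: "p \<in> poly_ring V" "subst_hom (\<lambda>v. Poly_Mapping.single (e v) 1) p = 0"
  shows "p \<in> ideal_gen_in (poly_ring V) T"
proof -
  let ?c = "Poly_Mapping.lookup p" and ?fibre = "\<lambda>z. {m \<in> Poly_Mapping.keys p. mon_exp e m = z}"
  define rep where "rep z = (SOME m. Poly_Mapping.keys m \<subseteq> V \<and> mon_exp e m = z)" for z
  have rep: "Poly_Mapping.keys (rep (mon_exp e m)) \<subseteq> V \<and> mon_exp e (rep (mon_exp e m)) = mon_exp e m"
    if "m \<in> Poly_Mapping.keys p" for m
    unfolding rep_def by (rule someI[of _ m]) (use p(1) that in \<open>simp add: poly_ring_def\<close>)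
  have fibre_sum: "(\<Sum>m\<in>?fibre z. ?c m) = 0" for z
    using p(2) lookup_subst_hom_monomial_map[of e p z] by simp
  have "(\<Sum>m\<in>Poly_Mapping.keys p. Poly_Mapping.single (rep (mon_exp e m)) (?c m))
      = (\<Sum>z\<in>mon_exp e ` Poly_Mapping.keys p. \<Sum>m\<in>?fibre z. Poly_Mapping.single (rep z) (?c m))"
    by (subst sum.image_gen[of _ _ "mon_exp e"]) (auto intro!: sum.cong)
  also have "\<dots> = (\<Sum>z\<in>mon_exp e ` Poly_Mapping.keys p. Poly_Mapping.single (rep z) (\<Sum>m\<in>?fibre z. ?c m))"
    by (simp add: single_sum)
  also have "\<dots> = 0"
    by (simp add: fibre_sum)
  finally have reps: "(\<Sum>m\<in>Poly_Mapping.keys p. Poly_Mapping.single (rep (mon_exp e m)) (?c m)) = 0" .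
  have "p = (\<Sum>m\<in>Poly_Mapping.keys p. Poly_Mapping.single m (?c m))"
    by (rule poly_mapping_eq_sum_single)
  also have "\<dots> = (\<Sum>m\<in>Poly_Mapping.keys p. mconst (?c m) * (mmonom m - mmonom (rep (mon_exp e m))))"
    using reps by (simp add: mconst_def mult_single right_diff_distrib sum_subtractf)
  also have "\<dots> \<in> ideal_gen_in (poly_ring V) T"
    using rep p(1) by (intro poly_ideal_sum poly_ideal_mult poly_ring_mconst connected)
      (auto simp: poly_ring_def)
  finally show ?thesis .
qed

section \<open>The monomial map \<open>\<phi>\<close>\<close>

definition phi_exp :: "nat \<times> nat set \<Rightarrow> (nat + nat) \<Rightarrow>\<^sub>0 nat" where
  "phi_exp v = Poly_Mapping.single (Inl (fst v)) 1 + (\<Sum>j\<in>snd v. Poly_Mapping.single (Inr j) 1)"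

lemma phi_eq_subst_hom:
  "(phi :: (nat \<times> nat set, 'k::comm_ring_1) mpoly \<Rightarrow> _) = subst_hom (\<lambda>v. Poly_Mapping.single (phi_exp v) 1)"
  unfolding phi_def
  by (rule arg_cong[where f = subst_hom], rule ext)
    (simp add: case_prod_beta mvar_def prod_single_one mult_single phi_exp_def)

lemma lookup_phi_exp_Inl: "Poly_Mapping.lookup (phi_exp v) (Inl i) = (if fst v = i then 1 else 0)"
  by (simp add: phi_exp_def lookup_add lookup_sum lookup_single)

lemma lookup_phi_exp_Inr:
  "finite (snd v) \<Longrightarrow> Poly_Mapping.lookup (phi_exp v) (Inr k) = (if k \<in> snd v then 1 else 0)"
  by (simp add: phi_exp_def lookup_add lookup_sum lookup_single when_def)

lemma phi_exp_neq_0: "phi_exp v \<noteq> 0"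
  using lookup_phi_exp_Inl[of v "fst v"] by auto

lemma phi_exp_pair_eqI:
  assumes "finite A" "finite B" "finite A'" "finite B'"
    and "\<And>x. (if i = x then 1 else 0) + (if j = x then 1 else 0) = (if i' = x then 1 else (0::nat)) + (if j' = x then 1 else 0)"
    and "\<And>k. (if k \<in> A then 1 else 0) + (if k \<in> B then 1 else 0) = (if k \<in> A' then 1 else (0::nat)) + (if k \<in> B' then 1 else 0)"
  shows "phi_exp (i, A) + phi_exp (j, B) = phi_exp (i', A') + phi_exp (j', B')"
proof (rule poly_mapping_eqI)
  fix z
  show "Poly_Mapping.lookup (phi_exp (i, A) + phi_exp (j, B)) z = Poly_Mapping.lookup (phi_exp (i', A') + phi_exp (j', B')) z"
  proof (cases z)
    case (Inl x)
    then show ?thesis using assms(5)[of x] by (simp add: lookup_add lookup_phi_exp_Inl)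
  next
    case (Inr k)
    then show ?thesis using assms(1-4) assms(6)[of k] by (simp add: lookup_add lookup_phi_exp_Inr)
  qed
qed

lemma phi_vars_subset_L_vars: "phi_vars n \<subseteq> L_vars n"
  by (auto simp: phi_vars_def L_vars_def)

lemma finite_snd_L_vars: "v \<in> L_vars n \<Longrightarrow> finite (snd v)"
  unfolding L_vars_def by (auto dest: finite_subset)

lemma finite_snd_phi_vars: "v \<in> phi_vars n \<Longrightarrow> finite (snd v)"
  using finite_snd_L_vars phi_vars_subset_L_vars by blast

lemma mvar_binomial_in_I_phi:
  assumes "v \<in> phi_vars n" "w \<in> phi_vars n" "v' \<in> phi_vars n" "w' \<in> phi_vars n"
    and "phi_exp v + phi_exp w = phi_exp v' + phi_exp w'"
  shows "(mvar v * mvar w - mvar v' * mvar w' :: (nat \<times> nat set, 'k::comm_ring_1) mpoly) \<in> I_phi n"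
proof -
  have "mvar v * mvar w - mvar v' * mvar w'
      = (mmonom (Poly_Mapping.single v 1 + Poly_Mapping.single w 1)
         - mmonom (Poly_Mapping.single v' 1 + Poly_Mapping.single w' 1) :: (_, 'k) mpoly)"
    by (simp add: mvar_def mult_single)
  moreover have "mon_exp phi_exp (Poly_Mapping.single v 1 + Poly_Mapping.single w 1)
      = mon_exp phi_exp (Poly_Mapping.single v' 1 + Poly_Mapping.single w' 1)"
    using assms(5) by (simp only: mon_exp_add mon_exp_single)
  moreover have "Poly_Mapping.keys (Poly_Mapping.single x 1 + Poly_Mapping.single y (1::nat)) \<subseteq> phi_vars n"
    if "x \<in> phi_vars n" "y \<in> phi_vars n" for x y
    using that keys_add[of "Poly_Mapping.single x 1" "Poly_Mapping.single y (1::nat)"] by auto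
  ultimately show ?thesis
    using assms(1-4) unfolding I_phi_def phi_eq_subst_hom
    by (simp add: subst_hom_monomial_map_mmonom_diff_eq_0_iff poly_ring_diff poly_ring_single)
qed

lemma T1_T2_subset_I_phi: "T1 n \<union> T2 n \<subseteq> I_phi n"
proof safe
  fix t assume "t \<in> T1 n"
  then obtain i A j B where t: "t = G_L_binom i A j B" "(i, A) \<in> L_vars n" "(j, B) \<in> L_vars n"
      "i \<notin> A" "j \<notin> B" "min i j \<notin> A \<inter> B" "max i j \<notin> A \<union> B"
    unfolding T1_def by blast
  have "phi_exp (i, A) + phi_exp (j, B) = phi_exp (min i j, A \<inter> B) + phi_exp (max i j, A \<union> B)"
    using finite_snd_L_vars[OF t(2)] finite_snd_L_vars[OF t(3)]
    by (intro phi_exp_pair_eqI) (auto simp: min_def max_def)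
  then show "t \<in> I_phi n"
    unfolding t(1) G_L_binom_def xvar_def
    by (rule mvar_binomial_in_I_phi[rotated 4]) (use t in \<open>auto simp: L_vars_def phi_vars_def min_def max_def\<close>)
next
  fix t assume "t \<in> T2 n"
  then obtain i A j B where t: "t = xvar i A * xvar j B - xvar i ((A \<inter> B) \<union> {j}) * xvar j ((A - {j}) \<union> B)"
      "(i, A) \<in> L_vars n" "(j, B) \<in> L_vars n" "i < j" "i \<notin> A" "j \<notin> B" "j \<in> A"
    unfolding T2_def by blast
  have "phi_exp (i, A) + phi_exp (j, B) = phi_exp (i, (A \<inter> B) \<union> {j}) + phi_exp (j, (A - {j}) \<union> B)"
    using finite_snd_L_vars[OF t(2)] finite_snd_L_vars[OF t(3)] t(6,7)
    by (intro phi_exp_pair_eqI) auto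
  then show "t \<in> I_phi n"
    unfolding t(1) xvar_def
    by (rule mvar_binomial_in_I_phi[rotated 4]) (use t in \<open>auto simp: L_vars_def phi_vars_def\<close>)
qed

abbreviation T_ideal :: "nat \<Rightarrow> (nat \<times> nat set, 'k::comm_ring_1) mpoly set" where
  "T_ideal n \<equiv> ideal_gen_in (poly_ring (phi_vars n)) (T1 n \<union> T2 n)"

lemma T_ideal_subset_I_phi: "T_ideal n \<subseteq> I_phi n"
  using poly_ideal_subset_kernel[of "T1 n \<union> T2 n" "phi_vars n"] T1_T2_subset_I_phi[of n]
  unfolding I_phi_def phi_def by blast

lemma mon_exp_eq_if_T_ideal:
  assumes "(mmonom m - mmonom m' :: (nat \<times> nat set, 'k::comm_ring_1) mpoly) \<in> T_ideal n"
  shows "mon_exp phi_exp m = mon_exp phi_exp m'"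
proof -
  have "(mmonom m - mmonom m' :: (nat \<times> nat set, 'k) mpoly) \<in> I_phi n"
    using assms T_ideal_subset_I_phi by blast
  then show ?thesis
    by (simp add: I_phi_def phi_eq_subst_hom subst_hom_monomial_map_mmonom_diff_eq_0_iff)
qed

lemma total_degree_remainder_less:
  assumes "(mmonom m - mmonom (Poly_Mapping.single v 1 + r) :: (nat \<times> nat set, 'k::comm_ring_1) mpoly)
    \<in> T_ideal n"
  shows "total_degree (mon_exp phi_exp r) < total_degree (mon_exp phi_exp m)"
proof -
  have "mon_exp phi_exp m = phi_exp v + mon_exp phi_exp r"
    using mon_exp_eq_if_T_ideal[OF assms] by (simp only: mon_exp_add mon_exp_single)
  then show ?thesis
    by (simp add: total_degree_add total_degree_pos[OF phi_exp_neq_0])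
qed

lemma lookup_mon_exp_phi_exp_Inl_pos:
  "0 < Poly_Mapping.lookup (mon_exp phi_exp m) (Inl i) \<longleftrightarrow> (\<exists>v\<in>Poly_Mapping.keys m. fst v = i)"
  by (auto simp: lookup_mon_exp lookup_phi_exp_Inl sum_nat_pos_iff in_keys_iff)

lemma lookup_mon_exp_phi_exp_Inr_pos:
  assumes "Poly_Mapping.keys m \<subseteq> phi_vars n"
  shows "0 < Poly_Mapping.lookup (mon_exp phi_exp m) (Inr k) \<longleftrightarrow> (\<exists>v\<in>Poly_Mapping.keys m. k \<in> snd v)"
proof -
  have "Poly_Mapping.lookup (mon_exp phi_exp m) (Inr k)
      = (\<Sum>v\<in>Poly_Mapping.keys m. Poly_Mapping.lookup m v * (if k \<in> snd v then 1 else 0))"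
    unfolding lookup_mon_exp
    using assms finite_snd_phi_vars by (intro sum.cong) (auto simp: lookup_phi_exp_Inr)
  then show ?thesis
    by (auto simp: sum_nat_pos_iff in_keys_iff)
qed

section \<open>Connecting monomials with the same image\<close>

definition beta_support :: "((nat + nat) \<Rightarrow>\<^sub>0 nat) \<Rightarrow> nat \<Rightarrow> nat set" where
  "beta_support e j = {k. k \<noteq> j \<and> 0 < Poly_Mapping.lookup e (Inr k)}"

lemma beta_support_subset:
  assumes m: "Poly_Mapping.keys m \<subseteq> phi_vars n"
  shows "beta_support (mon_exp phi_exp m) j \<subseteq> {1..n} - {j}"
proof
  fix k assume "k \<in> beta_support (mon_exp phi_exp m) j"
  then obtain v where "v \<in> Poly_Mapping.keys m" "k \<in> snd v" "k \<noteq> j"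
    by (auto simp: beta_support_def lookup_mon_exp_phi_exp_Inr_pos[OF m])
  moreover from this(1) m have "v \<in> phi_vars n" by blast
  ultimately show "k \<in> {1..n} - {j}"
    by (cases v) (auto simp: phi_vars_def)
qed

lemma top_variable_extended_in_phi_vars:
  assumes "Poly_Mapping.keys m \<subseteq> phi_vars n" "(j, A) \<in> Poly_Mapping.keys m"
  shows "(j, beta_support (mon_exp phi_exp m) j) \<in> phi_vars n"
  using assms beta_support_subset[OF assms(1)] by (auto simp: phi_vars_def)

lemma subset_beta_support:
  assumes m: "Poly_Mapping.keys m \<subseteq> phi_vars n" and jA: "(j, A) \<in> Poly_Mapping.keys m"
  shows "A \<subseteq> beta_support (mon_exp phi_exp m) j"
proof
  fix k assume "k \<in> A"
  moreover have "j \<notin> A"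
    using jA m by (auto simp: phi_vars_def)
  ultimately show "k \<in> beta_support (mon_exp phi_exp m) j"
    using jA by (force simp: beta_support_def lookup_mon_exp_phi_exp_Inr_pos[OF m])
qed

lemma exchange_by_T1:
  assumes m: "Poly_Mapping.keys m \<subseteq> phi_vars n"
    and iB: "(i, B) \<in> Poly_Mapping.keys m" and jA: "(j, A) \<in> Poly_Mapping.keys m"
    and "i \<le> j" "j \<notin> B" "L_incomp (i, B) (j, A)"
  obtains m' where "Poly_Mapping.keys m' \<subseteq> phi_vars n" "(j, B \<union> A) \<in> Poly_Mapping.keys m'"
    "(mmonom m - mmonom m' :: (nat \<times> nat set, 'k::comm_ring_1) mpoly) \<in> T_ideal n"
proof -
  have vars: "(i, B) \<in> phi_vars n" "(j, A) \<in> phi_vars n"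
    using iB jA m by auto
  then have "(i, B) \<in> L_vars n" "(j, A) \<in> L_vars n" "i \<notin> B" "j \<notin> A"
    using phi_vars_subset_L_vars by (auto simp: phi_vars_def)
  then have "(G_L_binom i B j A :: (nat \<times> nat set, 'k) mpoly) \<in> T1 n"
    using assms(4-6) unfolding T1_def min_def max_def by auto
  then have t: "(mvar (i, B) * mvar (j, A) - mvar (i, B \<inter> A) * mvar (j, B \<union> A) :: (_, 'k) mpoly)
      \<in> T1 n \<union> T2 n"
    using \<open>i \<le> j\<close> by (simp add: G_L_binom_def xvar_def)
  have new_vars: "(i, B \<inter> A) \<in> phi_vars n" "(j, B \<union> A) \<in> phi_vars n"
    using vars \<open>j \<notin> B\<close> by (auto simp: phi_vars_def)
  have "(i, B) \<noteq> (j, A)"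
    using assms(6) by (auto simp: L_incomp_def L_le_def)
  from exchange_pair[OF m iB jA this new_vars t] that show thesis .
qed

lemma exchange_by_T2:
  assumes m: "Poly_Mapping.keys m \<subseteq> phi_vars n"
    and iB: "(i, B) \<in> Poly_Mapping.keys m" and jA: "(j, A) \<in> Poly_Mapping.keys m"
    and "i < j" "j \<in> B" "L_incomp (i, B) (j, A)"
  obtains m' where "Poly_Mapping.keys m' \<subseteq> phi_vars n" "(j, (B - {j}) \<union> A) \<in> Poly_Mapping.keys m'"
    "(mmonom m - mmonom m' :: (nat \<times> nat set, 'k::comm_ring_1) mpoly) \<in> T_ideal n"
proof -
  have vars: "(i, B) \<in> phi_vars n" "(j, A) \<in> phi_vars n"
    using iB jA m by auto
  then have "(i, B) \<in> L_vars n" "(j, A) \<in> L_vars n" "i \<notin> B" "j \<notin> A"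
    using phi_vars_subset_L_vars by (auto simp: phi_vars_def)
  then have t: "(mvar (i, B) * mvar (j, A) - mvar (i, (B \<inter> A) \<union> {j}) * mvar (j, (B - {j}) \<union> A)
      :: (_, 'k) mpoly) \<in> T1 n \<union> T2 n"
    using assms(4-6) unfolding T2_def xvar_def by blast
  have new_vars: "(i, (B \<inter> A) \<union> {j}) \<in> phi_vars n" "(j, (B - {j}) \<union> A) \<in> phi_vars n"
    using vars \<open>i < j\<close> by (auto simp: phi_vars_def)
  have "(i, B) \<noteq> (j, A)"
    using \<open>i < j\<close> by simp
  from exchange_pair[OF m iB jA this new_vars t] that show thesis .
qed

lemma exchange_step:
  fixes m :: "(nat \<times> nat set) \<Rightarrow>\<^sub>0 nat"
  assumes m: "Poly_Mapping.keys m \<subseteq> phi_vars n" and jA: "(j, A) \<in> Poly_Mapping.keys m"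
    and top: "\<And>i. 0 < Poly_Mapping.lookup (mon_exp phi_exp m) (Inl i) \<Longrightarrow> i \<le> j"
    and k: "k \<in> beta_support (mon_exp phi_exp m) j" "k \<notin> A"
  obtains m' A' where "Poly_Mapping.keys m' \<subseteq> phi_vars n" "(j, A') \<in> Poly_Mapping.keys m'" "insert k A \<subseteq> A'"
    "(mmonom m - mmonom m' :: (nat \<times> nat set, 'k::comm_ring_1) mpoly) \<in> T_ideal n"
proof -
  obtain i B where iB: "(i, B) \<in> Poly_Mapping.keys m" "k \<in> B"
    using k(1) m by (auto simp: beta_support_def lookup_mon_exp_phi_exp_Inr_pos)
  have "i \<le> j"
    using top iB(1) lookup_mon_exp_phi_exp_Inl_pos by fastforce
  have "k \<noteq> j"
    using k(1) by (simp add: beta_support_def)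
  have incomp: "L_incomp (i, B) (j, A)" if "\<not> (i = j \<and> A \<subseteq> B)"
    using that iB(2) k(2) \<open>i \<le> j\<close> by (auto simp: L_incomp_def L_le_def)
  have "(i, B) \<in> phi_vars n"
    using iB(1) m by auto
  then consider "i = j" "A \<subseteq> B" | "\<not> (i = j \<and> A \<subseteq> B)" "j \<notin> B" | "i < j" "j \<in> B"
    using \<open>i \<le> j\<close> by (fastforce simp: phi_vars_def)
  then show thesis
  proof cases
    case 1
    then show thesis
      using that[of m B] iB jA m by (simp add: ideal_gen_in_0)
  next
    case 2
    then obtain m' where "Poly_Mapping.keys m' \<subseteq> phi_vars n" "(j, B \<union> A) \<in> Poly_Mapping.keys m'"
      "(mmonom m - mmonom m' :: (nat \<times> nat set, 'k) mpoly) \<in> T_ideal n"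
      using exchange_by_T1[OF m iB(1) jA \<open>i \<le> j\<close> 2(2) incomp[OF 2(1)]] by metis
    with that[of m' "B \<union> A"] iB(2) show thesis
      by blast
  next
    case 3
    then obtain m' where "Poly_Mapping.keys m' \<subseteq> phi_vars n" "(j, (B - {j}) \<union> A) \<in> Poly_Mapping.keys m'"
      "(mmonom m - mmonom m' :: (nat \<times> nat set, 'k) mpoly) \<in> T_ideal n"
      using exchange_by_T2[OF m iB(1) jA 3 incomp] 3(1) by auto
    with that[of m' "(B - {j}) \<union> A"] iB(2) \<open>k \<noteq> j\<close> show thesis
      by blast
  qed
qed

lemma absorb_into_top_variable:
  fixes m :: "(nat \<times> nat set) \<Rightarrow>\<^sub>0 nat"
  assumes "Poly_Mapping.keys m \<subseteq> phi_vars n" "(j, A) \<in> Poly_Mapping.keys m"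
    and "\<And>i. 0 < Poly_Mapping.lookup (mon_exp phi_exp m) (Inl i) \<Longrightarrow> i \<le> j"
  shows "\<exists>r. Poly_Mapping.keys r \<subseteq> phi_vars n \<and>
    (mmonom m - mmonom (Poly_Mapping.single (j, beta_support (mon_exp phi_exp m) j) 1 + r)
       :: (nat \<times> nat set, 'k::comm_ring_1) mpoly) \<in> T_ideal n"
  using assms
proof (induction "card (beta_support (mon_exp phi_exp m) j - A)" arbitrary: m A rule: less_induct)
  case less
  note m = less.prems(1) and jA = less.prems(2) and top = less.prems(3)
  let ?U = "beta_support (mon_exp phi_exp m) j"
  show ?case
  proof (cases "A = ?U")
    case True
    obtain r where r: "m = Poly_Mapping.single (j, A) 1 + r" "Poly_Mapping.keys r \<subseteq> Poly_Mapping.keys m"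
      using jA by (rule obtain_single_add)
    have "Poly_Mapping.keys r \<subseteq> phi_vars n"
      using r(2) m by blast
    moreover have "(mmonom m - mmonom (Poly_Mapping.single (j, ?U) 1 + r) :: (nat \<times> nat set, 'k) mpoly) \<in> T_ideal n"
      unfolding True[symmetric] r(1)[symmetric] by (simp add: ideal_gen_in_0)
    ultimately show ?thesis
      by blast
  next
    case False
    with subset_beta_support[OF m jA] have "A \<subset> ?U"
      by (rule psubsetI)
    then obtain k where k: "k \<in> ?U" "k \<notin> A"
      by (meson DiffE psubset_imp_ex_mem)
    obtain m' A' where m': "Poly_Mapping.keys m' \<subseteq> phi_vars n" "(j, A') \<in> Poly_Mapping.keys m'"
        "insert k A \<subseteq> A'" and conn: "(mmonom m - mmonom m' :: (nat \<times> nat set, 'k) mpoly) \<in> T_ideal n"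
      using exchange_step[OF m jA top k] by blast
    have same: "mon_exp phi_exp m' = mon_exp phi_exp m"
      using mon_exp_eq_if_T_ideal[OF conn] by simp
    have "finite ?U"
      using beta_support_subset[OF m] by (rule finite_subset) simp
    moreover have "?U - A' \<subset> ?U - A"
      using m'(3) k subset_beta_support[OF m'(1,2)] unfolding same by blast
    ultimately have "card (beta_support (mon_exp phi_exp m') j - A') < card (?U - A)"
      unfolding same by (meson finite_Diff psubset_card_mono)
    moreover have "\<And>i. 0 < Poly_Mapping.lookup (mon_exp phi_exp m') (Inl i) \<Longrightarrow> i \<le> j"
      using top unfolding same .
    ultimately obtain r where r: "Poly_Mapping.keys r \<subseteq> phi_vars n"
        "(mmonom m' - mmonom (Poly_Mapping.single (j, ?U) 1 + r) :: (nat \<times> nat set, 'k) mpoly) \<in> T_ideal n"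
      using less.hyps[OF _ m'(1,2)] unfolding same by blast
    then show ?thesis
      using mmonom_diff_trans[OF conn r(2)] by blast
  qed
qed

lemma obtain_top_variable:
  assumes "m \<noteq> 0"
  obtains j A where "(j, A) \<in> Poly_Mapping.keys m"
    "\<And>i. 0 < Poly_Mapping.lookup (mon_exp phi_exp m) (Inl i) \<Longrightarrow> i \<le> j"
proof -
  define j where "j = Max (fst ` Poly_Mapping.keys m)"
  have "j \<in> fst ` Poly_Mapping.keys m"
    unfolding j_def using assms by (intro Max_in) auto
  then obtain A where "(j, A) \<in> Poly_Mapping.keys m"
    by auto
  moreover have "i \<le> j" if "0 < Poly_Mapping.lookup (mon_exp phi_exp m) (Inl i)" for i
  proof -
    from that obtain v where "v \<in> Poly_Mapping.keys m" "fst v = i"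
      by (auto simp: lookup_mon_exp_phi_exp_Inl_pos)
    then show "i \<le> j"
      unfolding j_def by (metis Max_ge finite_imageI finite_keys imageI)
  qed
  ultimately show thesis
    using that by blast
qed

lemma same_image_monomials_connected:
  fixes m m' :: "(nat \<times> nat set) \<Rightarrow>\<^sub>0 nat"
  assumes "Poly_Mapping.keys m \<subseteq> phi_vars n" "Poly_Mapping.keys m' \<subseteq> phi_vars n"
    and "mon_exp phi_exp m = mon_exp phi_exp m'"
  shows "(mmonom m - mmonom m' :: (nat \<times> nat set, 'k::comm_ring_1) mpoly) \<in> T_ideal n"
  using assms
proof (induction "total_degree (mon_exp phi_exp m)" arbitrary: m m' rule: less_induct)
  case less
  note m = less.prems(1) and m' = less.prems(2) and same = less.prems(3)
  show ?case
  proof (cases "m = 0")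
    case True
    then have "mon_exp phi_exp m' = 0"
      using same by simp
    then have "m' = 0"
      by (simp add: mon_exp_eq_0_iff[OF phi_exp_neq_0])
    with True show ?thesis
      by (simp add: ideal_gen_in_0)
  next
    case False
    then obtain j A where jA: "(j, A) \<in> Poly_Mapping.keys m"
      and top: "\<And>i. 0 < Poly_Mapping.lookup (mon_exp phi_exp m) (Inl i) \<Longrightarrow> i \<le> j"
      by (elim obtain_top_variable) blast
    have "0 < Poly_Mapping.lookup (mon_exp phi_exp m') (Inl j)"
      unfolding same[symmetric] lookup_mon_exp_phi_exp_Inl_pos using jA by (metis fst_conv)
    then obtain A' where jA': "(j, A') \<in> Poly_Mapping.keys m'"
      by (auto simp: lookup_mon_exp_phi_exp_Inl_pos)
    define U where "U = beta_support (mon_exp phi_exp m) j"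
    define x where "x = Poly_Mapping.single (j, U) (1::nat)"
    obtain r where r: "Poly_Mapping.keys r \<subseteq> phi_vars n"
        "(mmonom m - mmonom (x + r) :: (nat \<times> nat set, 'k) mpoly) \<in> T_ideal n"
      using absorb_into_top_variable[OF m jA top] unfolding x_def U_def by blast
    obtain r' where r': "Poly_Mapping.keys r' \<subseteq> phi_vars n"
        "(mmonom m' - mmonom (x + r') :: (nat \<times> nat set, 'k) mpoly) \<in> T_ideal n"
      using absorb_into_top_variable[OF m' jA'] top unfolding x_def U_def same by blast
    have "mon_exp phi_exp (x + r) = mon_exp phi_exp (x + r')"
      using mon_exp_eq_if_T_ideal[OF r(2)] mon_exp_eq_if_T_ideal[OF r'(2)] same by simp
    then have "mon_exp phi_exp r = mon_exp phi_exp r'"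
      by (simp add: mon_exp_add)
    moreover have "total_degree (mon_exp phi_exp r) < total_degree (mon_exp phi_exp m)"
      using r(2) unfolding x_def by (rule total_degree_remainder_less)
    ultimately have "(mmonom r - mmonom r' :: (nat \<times> nat set, 'k) mpoly) \<in> T_ideal n"
      using less.hyps r(1) r'(1) by blast
    moreover have "Poly_Mapping.keys x \<subseteq> phi_vars n"
      using top_variable_extended_in_phi_vars[OF m jA] by (simp add: x_def U_def)
    ultimately show ?thesis
      using r(2) r'(2) by (rule mmonom_diff_common_factor)
  qed
qed

lemma I_phi_subset_T_ideal: "I_phi n \<subseteq> T_ideal n"
proof
  fix p assume "p \<in> I_phi n"
  then have "p \<in> poly_ring (phi_vars n)" "subst_hom (\<lambda>v. Poly_Mapping.single (phi_exp v) 1) p = 0"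
    by (simp_all add: I_phi_def phi_eq_subst_hom)
  then show "p \<in> T_ideal n"
    by (rule kernel_subset_poly_ideal_if_fibres_connected[rotated]) (rule same_image_monomials_connected)
qed

theorem theorem3p5:
  fixes n :: nat
  shows "ideal_gen_in (poly_ring (phi_vars n)) (T1 n \<union> T2 n)
           = (I_phi n :: (nat \<times> nat set, 'k::field) mpoly set)"
  using T_ideal_subset_I_phi I_phi_subset_T_ideal by (rule equalityI)

end
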